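(* Let $(X,d)$ be a compact metric space, $f:X\to X$ continuous, $x\in X$, and $\Lambda=\omega_f(x)$. Then $C(\Lambda,f)$ equals the closure of the set $\{y\in\Lambda: \underline d(N(y,B_\varepsilon(y)))>0 \text{ for every } \varepsilon>0\}$.
   Context: $\omega_f(x)$ is the $\omega$-limit set of $x$. $N(y,U)=\{n\ge1: f^n(y)\in U\}$, $B_\varepsilon(y)$ the open ball, $\underline d(S)=\liminf_{n\to\infty}|S\cap\{0,\dots,n-1\}|/n$. For a closed $f$-invariant set $\Lambda$, the measure center $C(\Lambda,f)$ is the smallest closed $f$-invariant subset of $\Lambda$ having full measure for every $f$-invariant Borel probability measure on $\Lambda$. *)

theory Defs
  imports "HOL-Probability.Probability"
begin

definition omega_limit :: "('a::topological_space \<Rightarrow> 'a) \<Rightarrow> 'a \<Rightarrow> 'a set" where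
  "omega_limit f x = {y. \<exists>r. strict_mono r \<and> ((\<lambda>k. (f ^^ (r k)) x) \<longlonglongrightarrow> y)}"

definition visit_times :: "('a \<Rightarrow> 'a) \<Rightarrow> 'a \<Rightarrow> 'a set \<Rightarrow> nat set" where
  "visit_times f y U = {n. n \<ge> 1 \<and> (f ^^ n) y \<in> U}"

definition lower_density :: "nat set \<Rightarrow> ereal" where
  "lower_density S = liminf (\<lambda>n. ereal (real (card (S \<inter> {0..<n})) / real n))"

definition invariant_measures :: "('a::topological_space \<Rightarrow> 'a) \<Rightarrow> 'a set \<Rightarrow> 'a measure set" where
  "invariant_measures f L =
     {\<mu>. sets \<mu> = sets (restrict_space borel L) \<and> prob_space \<mu> \<and>
          (\<forall>A \<in> sets \<mu>. emeasure \<mu> (f -` A \<inter> L) = emeasure \<mu> A)}"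

definition is_measure_center :: "('a::topological_space \<Rightarrow> 'a) \<Rightarrow> 'a set \<Rightarrow> 'a set \<Rightarrow> bool" where
  "is_measure_center f L C \<longleftrightarrow>
     C \<subseteq> L \<and> closed C \<and> f ` C \<subseteq> C \<and> (\<forall>\<mu> \<in> invariant_measures f L. emeasure \<mu> C = 1) \<and>
     (\<forall>D. D \<subseteq> L \<and> closed D \<and> f ` D \<subseteq> D \<and> (\<forall>\<mu> \<in> invariant_measures f L. emeasure \<mu> D = 1)
          \<longrightarrow> C \<subseteq> D)"

definition measure_center :: "'a set \<Rightarrow> ('a::topological_space \<Rightarrow> 'a) \<Rightarrow> 'a set" where
  "measure_center L f = (THE C. is_measure_center f L C)"

end

theory Submission
  imports Defs
begin

text \<open>Call \<open>y\<close> weakly almost periodic if its orbit returns to every ball around \<open>y\<close> with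
  positive lower density, and let \<open>W\<close> be the closure of the weakly almost periodic points of \<open>\<Lambda>\<close>.

  \<^item> \<open>W\<close> has full measure. For a measure-preserving map, the maximal ergodic inequality applied
  to \<open>\<delta> - 1\<^sub>G\<close> shows that some point of any set \<open>G\<close> of positive measure returns to \<open>G\<close> with
  positive lower density. Applied to the small pieces of the set of points returning too rarely to
  their \<open>r\<close>-balls, this shows that set is null.

  \<^item> \<open>W\<close> is contained in every closed set \<open>D\<close> of full measure. If \<open>y \<in> W\<close> lay outside \<open>D\<close>, the
  orbit of \<open>y\<close> would visit a closed ball \<open>B\<close> disjoint from \<open>D\<close> with positive lower density, and
  a Krylov--Bogolyubov limit of its empirical measures would be an invariant measure with
  \<open>\<mu>(B) > 0\<close>.\<close>

section \<open>Omega-limit sets\<close>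

lemma frequently_near_imp_subseq_tendsto:
  fixes s :: "nat \<Rightarrow> 'a::metric_space"
  assumes near: "\<And>e N. e > 0 \<Longrightarrow> \<exists>n\<ge>N. dist (s n) y < e"
  obtains r where "strict_mono r" "(s \<circ> r) \<longlonglongrightarrow> y"
proof -
  have "\<forall>N k. \<exists>n\<ge>N. dist (s n) y < 1 / Suc k"
    using near by simp
  then obtain g where g_ge: "\<And>N k. g N k \<ge> N" and g_near: "\<And>N k. dist (s (g N k)) y < 1 / Suc k"
    by metis
  define r where "r = rec_nat (g 0 0) (\<lambda>k rk. g (Suc rk) (Suc k))"
  have r_0: "r 0 = g 0 0" and r_Suc: "r (Suc k) = g (Suc (r k)) (Suc k)" for k
    by (simp_all add: r_def)
  have "strict_mono r"
    unfolding strict_mono_Suc_iff r_Suc using g_ge Suc_le_lessD by blast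
  moreover have "(s \<circ> r) \<longlonglongrightarrow> y"
  proof (rule tendsto_dist_iff[THEN iffD2],
      intro Lim_null_comparison[OF _ LIMSEQ_inverse_real_of_nat] always_eventually allI)
    fix k
    have "dist (s (r k)) y < 1 / Suc k"
      by (cases k) (simp_all only: r_0 r_Suc g_near)
    then show "norm (dist ((s \<circ> r) k) y) \<le> inverse (real (Suc k))"
      by (simp add: inverse_eq_divide)
  qed
  ultimately show thesis by (rule that)
qed

lemma omega_limit_iff:
  fixes f :: "'a::metric_space \<Rightarrow> 'a"
  shows "y \<in> omega_limit f x \<longleftrightarrow> (\<forall>e>0. \<forall>N. \<exists>n\<ge>N. dist ((f ^^ n) x) y < e)"
proof
  assume "y \<in> omega_limit f x"
  then obtain r where r: "strict_mono r" "(\<lambda>k. (f ^^ r k) x) \<longlonglongrightarrow> y"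
    by (auto simp: omega_limit_def)
  show "\<forall>e>0. \<forall>N. \<exists>n\<ge>N. dist ((f ^^ n) x) y < e"
  proof (intro allI impI)
    fix e :: real and N
    assume "e > 0"
    then obtain K where "\<forall>k\<ge>K. dist ((f ^^ r k) x) y < e"
      using metric_LIMSEQ_D[OF r(2)] by blast
    then show "\<exists>n\<ge>N. dist ((f ^^ n) x) y < e"
      using seq_suble[OF r(1), of "max K N"] by (intro exI[of _ "r (max K N)"]) auto
  qed
next
  assume "\<forall>e>0. \<forall>N. \<exists>n\<ge>N. dist ((f ^^ n) x) y < e"
  then obtain r where "strict_mono r" "((\<lambda>n. (f ^^ n) x) \<circ> r) \<longlonglongrightarrow> y"
    using frequently_near_imp_subseq_tendsto[of "\<lambda>n. (f ^^ n) x" y] by blast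
  then show "y \<in> omega_limit f x"
    by (auto simp: omega_limit_def comp_def)
qed

lemma closed_omega_limit:
  fixes f :: "'a::metric_space \<Rightarrow> 'a"
  shows "closed (omega_limit f x)"
  unfolding closed_sequential_limits
proof (intro allI impI, elim conjE)
  fix ys :: "nat \<Rightarrow> 'a" and y
  assume ys: "\<forall>n. ys n \<in> omega_limit f x" and lim: "ys \<longlonglongrightarrow> y"
  show "y \<in> omega_limit f x"
    unfolding omega_limit_iff
  proof (intro allI impI)
    fix e :: real and N
    assume "e > 0"
    then obtain j where j: "dist (ys j) y < e / 2"
      using metric_LIMSEQ_D[OF lim, of "e / 2"] by auto
    obtain n where n: "n \<ge> N" "dist ((f ^^ n) x) (ys j) < e / 2"
      using ys \<open>e > 0\<close> unfolding omega_limit_iff by (meson half_gt_zero)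
    then show "\<exists>n\<ge>N. dist ((f ^^ n) x) y < e"
      using dist_triangle[of "(f ^^ n) x" y "ys j"] j by (intro exI[of _ n]) auto
  qed
qed

lemma image_omega_limit_subset:
  fixes f :: "'a::metric_space \<Rightarrow> 'a"
  assumes "continuous_on UNIV f"
  shows "f ` omega_limit f x \<subseteq> omega_limit f x"
proof
  fix z
  assume "z \<in> f ` omega_limit f x"
  then obtain y r where z: "z = f y" and r: "strict_mono r" "(\<lambda>k. (f ^^ r k) x) \<longlonglongrightarrow> y"
    by (auto simp: omega_limit_def)
  have "(\<lambda>k. f ((f ^^ r k) x)) \<longlonglongrightarrow> f y"
    by (rule isCont_tendsto_compose[OF _ r(2)])
       (use assms in \<open>simp add: continuous_on_eq_continuous_at\<close>)
  then have "(\<lambda>k. (f ^^ Suc (r k)) x) \<longlonglongrightarrow> z"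
    by (simp add: z)
  moreover have "strict_mono (\<lambda>k. Suc (r k))"
    using r(1) by (simp add: strict_mono_def)
  ultimately show "z \<in> omega_limit f x"
    unfolding omega_limit_def by blast
qed

section \<open>Positive lower density and weakly almost periodic points\<close>

definition positive_lower_density :: "nat set \<Rightarrow> bool" where
  "positive_lower_density S \<longleftrightarrow>
     (\<exists>c>0. \<forall>\<^sub>F n in sequentially. c * real n \<le> real (card (S \<inter> {0..<n})))"

lemma lower_density_pos_iff: "lower_density S > 0 \<longleftrightarrow> positive_lower_density S"
proof
  assume "lower_density S > 0"
  then obtain c :: ereal where "0 < c" "c < lower_density S"
    using ereal_dense2 by blast
  then obtain c :: real where c: "0 < c" "ereal c < lower_density S"
    by (cases c) auto
  then have "\<forall>\<^sub>F n in sequentially. c < real (card (S \<inter> {0..<n})) / real n"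
    unfolding lower_density_def by (auto dest: less_LiminfD)
  then have "\<forall>\<^sub>F n in sequentially. c * real n \<le> real (card (S \<inter> {0..<n}))"
    using eventually_gt_at_top[of 0]
    by eventually_elim (simp add: field_simps)
  with c(1) show "positive_lower_density S"
    unfolding positive_lower_density_def by blast
next
  assume "positive_lower_density S"
  then obtain c where c: "c > 0" "\<forall>\<^sub>F n in sequentially. c * real n \<le> real (card (S \<inter> {0..<n}))"
    unfolding positive_lower_density_def by blast
  have "\<forall>\<^sub>F n in sequentially. ereal c \<le> ereal (real (card (S \<inter> {0..<n})) / real n)"
    using c(2) eventually_gt_at_top[of 0]
    by eventually_elim (auto simp: field_simps)
  then have "ereal c \<le> lower_density S"
    unfolding lower_density_def by (rule Liminf_bounded)
  with c(1) show "lower_density S > 0"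
    by (meson ereal_less(2) less_le_trans)
qed

lemma positive_lower_density_mono:
  assumes "positive_lower_density S"
    and "\<And>n. card (S \<inter> {0..<n}) \<le> card (T \<inter> {0..<n}) + k"
  shows "positive_lower_density T"
proof -
  obtain c where c: "c > 0" "\<forall>\<^sub>F n in sequentially. c * real n \<le> real (card (S \<inter> {0..<n}))"
    using assms(1) unfolding positive_lower_density_def by blast
  obtain N :: nat where N: "real N > 2 * real k / c"
    using reals_Archimedean2 by blast
  have "\<forall>\<^sub>F n in sequentially. c / 2 * real n \<le> real (card (T \<inter> {0..<n}))"
    using c(2) eventually_ge_at_top[of N]
  proof eventually_elim
    case (elim n)
    then have "2 * real k / c < real n"
      using N by (smt (verit) of_nat_le_iff)
    then have "real k < c / 2 * real n"
      using c(1) by (simp add: field_simps)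
    then show ?case
      using elim(1) assms(2)[of n] by linarith
  qed
  then show ?thesis
    unfolding positive_lower_density_def using c(1) by (intro exI[of _ "c / 2"]) auto
qed

lemma positive_lower_density_subset:
  "positive_lower_density S \<Longrightarrow> S \<subseteq> T \<Longrightarrow> positive_lower_density T"
proof (rule positive_lower_density_mono[where k = 0])
  fix n
  assume "S \<subseteq> T"
  then have "S \<inter> {0..<n} \<subseteq> T \<inter> {0..<n}"
    by blast
  then show "card (S \<inter> {0..<n}) \<le> card (T \<inter> {0..<n}) + 0"
    by (simp add: card_mono)
qed

definition weakly_almost_periodic :: "('a::metric_space \<Rightarrow> 'a) \<Rightarrow> 'a \<Rightarrow> bool" where
  "weakly_almost_periodic f y \<longleftrightarrow>
     (\<forall>\<epsilon>>0. positive_lower_density (visit_times f y (ball y \<epsilon>)))"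

lemma visit_times_mono: "U \<subseteq> V \<Longrightarrow> visit_times f y U \<subseteq> visit_times f y V"
  by (auto simp: visit_times_def)

lemma weakly_almost_periodic_image:
  fixes f :: "'a::metric_space \<Rightarrow> 'a"
  assumes cont: "continuous_on UNIV f" and y: "weakly_almost_periodic f y"
  shows "weakly_almost_periodic f (f y)"
  unfolding weakly_almost_periodic_def
proof (intro allI impI)
  fix \<epsilon> :: real
  assume "\<epsilon> > 0"
  moreover have "isCont f y"
    using cont by (simp add: continuous_on_eq_continuous_at)
  ultimately obtain \<delta> where \<delta>: "\<delta> > 0" "\<And>z. dist z y < \<delta> \<Longrightarrow> dist (f z) (f y) < \<epsilon>"
    unfolding continuous_at_eps_delta by blast
  have "visit_times f y (ball y \<delta>) \<subseteq> visit_times f (f y) (ball (f y) \<epsilon>)"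
  proof
    fix m
    assume "m \<in> visit_times f y (ball y \<delta>)"
    moreover have "(f ^^ m) (f y) = f ((f ^^ m) y)"
      by (simp add: funpow_swap1)
    ultimately show "m \<in> visit_times f (f y) (ball (f y) \<epsilon>)"
      using \<delta>(2)[of "(f ^^ m) y"] by (auto simp: visit_times_def dist_commute)
  qed
  with y \<delta>(1) show "positive_lower_density (visit_times f (f y) (ball (f y) \<epsilon>))"
    unfolding weakly_almost_periodic_def by (blast intro: positive_lower_density_subset)
qed

section \<open>The maximal ergodic inequality and recurrence\<close>

definition birkhoff_sum :: "('a \<Rightarrow> real) \<Rightarrow> ('a \<Rightarrow> 'a) \<Rightarrow> nat \<Rightarrow> 'a \<Rightarrow> real" where
  "birkhoff_sum \<phi> T n z = (\<Sum>i<n. \<phi> ((T ^^ i) z))"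

definition max_birkhoff_sum :: "('a \<Rightarrow> real) \<Rightarrow> ('a \<Rightarrow> 'a) \<Rightarrow> nat \<Rightarrow> 'a \<Rightarrow> real" where
  "max_birkhoff_sum \<phi> T N z = Max ((\<lambda>n. birkhoff_sum \<phi> T n z) ` {..N})"

lemma birkhoff_sum_0 [simp]: "birkhoff_sum \<phi> T 0 z = 0"
  by (simp add: birkhoff_sum_def)

lemma birkhoff_sum_Suc: "birkhoff_sum \<phi> T (Suc n) z = \<phi> z + birkhoff_sum \<phi> T n (T z)"
  unfolding birkhoff_sum_def sum.lessThan_Suc_shift
  by (simp add: funpow_Suc_right del: funpow.simps)

lemma birkhoff_sum_le_max: "n \<le> N \<Longrightarrow> birkhoff_sum \<phi> T n z \<le> max_birkhoff_sum \<phi> T N z"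
  unfolding max_birkhoff_sum_def by (intro Max_ge) auto

lemma max_birkhoff_sum_attained: "\<exists>n\<le>N. max_birkhoff_sum \<phi> T N z = birkhoff_sum \<phi> T n z"
proof -
  have "max_birkhoff_sum \<phi> T N z \<in> (\<lambda>n. birkhoff_sum \<phi> T n z) ` {..N}"
    unfolding max_birkhoff_sum_def by (intro Max_in) auto
  then show ?thesis
    by auto
qed

lemma max_birkhoff_sum_nonneg: "0 \<le> max_birkhoff_sum \<phi> T N z"
  using birkhoff_sum_le_max[of 0 N] by simp

lemma max_birkhoff_sum_mono: "N \<le> N' \<Longrightarrow> max_birkhoff_sum \<phi> T N z \<le> max_birkhoff_sum \<phi> T N' z"
  using max_birkhoff_sum_attained[of N \<phi> T z] birkhoff_sum_le_max[of _ N' \<phi> T z] by force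

text \<open>Where the maximum is positive it is attained at a positive length, so one term of the
  orbit splits off.\<close>

lemma max_birkhoff_sum_le_step:
  assumes pos: "max_birkhoff_sum \<phi> T N z > 0"
  shows "max_birkhoff_sum \<phi> T N z \<le> \<phi> z + max_birkhoff_sum \<phi> T N (T z)"
proof -
  obtain n where n: "n \<le> N" "max_birkhoff_sum \<phi> T N z = birkhoff_sum \<phi> T n z"
    using max_birkhoff_sum_attained[of N \<phi> T z] by blast
  with pos obtain m where m: "n = Suc m"
    by (cases n) auto
  have "birkhoff_sum \<phi> T m (T z) \<le> max_birkhoff_sum \<phi> T N (T z)"
    using n(1) m by (intro birkhoff_sum_le_max) simp
  then show ?thesis
    using n(2) m by (simp add: birkhoff_sum_Suc)
qed

lemma borel_measurable_birkhoff_sum [measurable]: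
  assumes "T \<in> measurable M M" "\<phi> \<in> borel_measurable M"
  shows "birkhoff_sum \<phi> T n \<in> borel_measurable M"
proof -
  have "(\<lambda>z. \<phi> ((T ^^ i) z)) \<in> borel_measurable M" for i
    using measurable_comp[OF measurable_compose_n[OF assms(1), of i] assms(2)] by (simp add: comp_def)
  then show ?thesis
    unfolding birkhoff_sum_def[abs_def] by measurable
qed

lemma borel_measurable_max_birkhoff_sum [measurable]:
  assumes "T \<in> measurable M M" "\<phi> \<in> borel_measurable M"
  shows "max_birkhoff_sum \<phi> T N \<in> borel_measurable M"
  unfolding max_birkhoff_sum_def[abs_def] using assms by measurable

lemma abs_max_birkhoff_sum_le:
  assumes "\<And>w. \<bar>\<phi> w\<bar> \<le> B"
  shows "\<bar>max_birkhoff_sum \<phi> T N z\<bar> \<le> real N * B"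
proof -
  obtain n where n: "n \<le> N" "max_birkhoff_sum \<phi> T N z = birkhoff_sum \<phi> T n z"
    using max_birkhoff_sum_attained[of N \<phi> T z] by blast
  have "\<bar>birkhoff_sum \<phi> T n z\<bar> \<le> (\<Sum>i<n. \<bar>\<phi> ((T ^^ i) z)\<bar>)"
    unfolding birkhoff_sum_def by (rule sum_abs)
  also have "\<dots> \<le> real n * B"
    using sum_mono[of "{..<n}" "\<lambda>i. \<bar>\<phi> ((T ^^ i) z)\<bar>" "\<lambda>_. B"] assms by simp
  also have "\<dots> \<le> real N * B"
    using n(1) assms[of z] by (intro mult_right_mono) auto
  finally show ?thesis
    using n(2) by simp
qed

theorem maximal_ergodic_inequality:
  assumes "prob_space M" and T: "T \<in> measurable M M" and inv: "distr M M T = M"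
    and \<phi>: "\<phi> \<in> borel_measurable M" and bounded: "\<And>z. \<bar>\<phi> z\<bar> \<le> B"
  shows "0 \<le> (\<integral>z. indicator {z\<in>space M. max_birkhoff_sum \<phi> T N z > 0} z * \<phi> z \<partial>M)"
proof -
  interpret prob_space M by fact
  let ?m = "max_birkhoff_sum \<phi> T N"
  let ?A = "{z\<in>space M. ?m z > 0}"
  have [measurable]: "?m \<in> borel_measurable M"
    using T \<phi> by measurable
  have int_m: "integrable M ?m"
    by (rule integrable_const_bound[where B = "real N * B"])
       (simp_all add: abs_max_birkhoff_sum_le[OF bounded])
  have int_mT: "integrable M (\<lambda>z. ?m (T z))"
    by (rule integrable_const_bound[where B = "real N * B"])
       (use T in \<open>simp_all add: abs_max_birkhoff_sum_le[OF bounded]\<close>)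
  have "0 \<le> B"
    using bounded[of undefined] by linarith
  then have int_A: "integrable M (\<lambda>z. indicator ?A z * \<phi> z)"
    by (intro integrable_const_bound[where B = B]) (use bounded \<phi> in \<open>auto simp: indicator_def\<close>)
  have "(\<integral>z. ?m (T z) \<partial>M) = (\<integral>z. ?m z \<partial>distr M M T)"
    by (rule integral_distr[OF T, symmetric]) simp
  then have invariance: "(\<integral>z. ?m z - ?m (T z) \<partial>M) = 0"
    using Bochner_Integration.integral_diff[OF int_m int_mT] inv by simp
  have "?m z - ?m (T z) \<le> indicator ?A z * \<phi> z" if "z \<in> space M" for z
    using that max_birkhoff_sum_le_step[of \<phi> T N z]
      max_birkhoff_sum_nonneg[of \<phi> T N z] max_birkhoff_sum_nonneg[of \<phi> T N "T z"]
    by (cases "?m z > 0") auto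
  then have "(\<integral>z. ?m z - ?m (T z) \<partial>M) \<le> (\<integral>z. indicator ?A z * \<phi> z \<partial>M)"
    by (intro integral_mono int_A Bochner_Integration.integrable_diff int_m int_mT)
  with invariance show ?thesis
    by simp
qed

lemma birkhoff_sum_indicator:
  "birkhoff_sum (\<lambda>z. \<delta> - indicator G z) T n z = real n * \<delta> - real (card ({i. (T ^^ i) z \<in> G} \<inter> {0..<n}))"
proof -
  have "(\<Sum>i<n. indicator G ((T ^^ i) z)) = real (card ({i. (T ^^ i) z \<in> G} \<inter> {0..<n}))"
    by (simp add: indicator_def sum.If_cases Int_commute atLeast0LessThan)
  then show ?thesis
    by (simp add: birkhoff_sum_def sum_subtractf)
qed

lemma measure_max_birkhoff_sum_pos_le:
  assumes "prob_space M" and T: "T \<in> measurable M M" and inv: "distr M M T = M"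
    and G: "G \<in> sets M" and \<delta>: "0 \<le> \<delta>" "\<delta> \<le> 1"
  shows "measure M ({z\<in>space M. max_birkhoff_sum (\<lambda>z. \<delta> - indicator G z) T N z > 0} \<inter> G) \<le> \<delta>"
    (is "measure M (?A \<inter> G) \<le> _")
proof -
  interpret prob_space M by fact
  have [measurable]: "(\<lambda>z. \<delta> - indicator G z) \<in> borel_measurable M"
    using G by measurable
  have A [measurable]: "?A \<in> sets M"
    using T by measurable
  have "\<bar>\<delta> - indicator G z\<bar> \<le> 1" for z
    using \<delta> by (auto simp: indicator_def)
  then have "0 \<le> (\<integral>z. indicator ?A z * (\<delta> - indicator G z) \<partial>M)"
    by (intro maximal_ergodic_inequality[OF \<open>prob_space M\<close> T inv]) simp_all
  also have "\<dots> = (\<integral>z. \<delta> * indicator ?A z - indicator (?A \<inter> G) z \<partial>M)"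
    by (intro Bochner_Integration.integral_cong) (auto simp: indicator_def)
  also have "\<dots> = \<delta> * measure M ?A - measure M (?A \<inter> G)"
    using A G
    by (subst Bochner_Integration.integral_diff)
       (auto intro!: integrable_real_indicator simp: less_top[symmetric])
  finally have "measure M (?A \<inter> G) \<le> \<delta> * measure M ?A"
    by simp
  also have "\<dots> \<le> \<delta>"
    using \<delta> prob_le_1[of ?A] by (simp add: mult_left_le)
  finally show ?thesis .
qed

text \<open>If no point of \<open>G\<close> returned with positive lower density, then for \<open>\<delta> = \<mu>(G)/2\<close> every point
  of \<open>G\<close> would lie in the set where some Birkhoff sum of \<open>\<delta> - 1\<^sub>G\<close> is positive, which meets \<open>G\<close> in
  measure at most \<open>\<delta>\<close>.\<close>

theorem positive_lower_density_recurrence: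
  assumes "prob_space M" and T: "T \<in> measurable M M" and inv: "distr M M T = M"
    and G: "G \<in> sets M" and pos: "measure M G > 0"
  shows "\<exists>z\<in>G. positive_lower_density {i. (T ^^ i) z \<in> G}"
proof (rule ccontr)
  interpret prob_space M by fact
  define \<delta> where "\<delta> = measure M G / 2"
  have \<delta>: "0 < \<delta>" "\<delta> \<le> 1"
    using pos prob_le_1[of G] unfolding \<delta>_def by linarith+
  define A where "A N = {z\<in>space M. max_birkhoff_sum (\<lambda>z. \<delta> - indicator G z) T N z > 0}" for N
  assume no_return: "\<not> ?thesis"
  have "G \<subseteq> (\<Union>N. A N)"
  proof
    fix z
    assume z: "z \<in> G"
    with no_return \<delta>(1) have "\<not> (\<forall>\<^sub>F n in sequentially. \<delta> * real n \<le> real (card ({i. (T ^^ i) z \<in> G} \<inter> {0..<n})))"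
      unfolding positive_lower_density_def by blast
    then obtain n where "real (card ({i. (T ^^ i) z \<in> G} \<inter> {0..<n})) < \<delta> * real n"
      unfolding eventually_sequentially by (meson le_refl not_le)
    then have "0 < birkhoff_sum (\<lambda>z. \<delta> - indicator G z) T n z"
      by (simp add: birkhoff_sum_indicator mult.commute)
    also have "\<dots> \<le> max_birkhoff_sum (\<lambda>z. \<delta> - indicator G z) T n z"
      by (rule birkhoff_sum_le_max) simp
    finally show "z \<in> (\<Union>N. A N)"
      using z sets.sets_into_space[OF G] by (auto simp: A_def)
  qed
  then have "(\<Union>N. A N \<inter> G) = G"
    by blast
  moreover have "A N \<in> sets M" for N
    using T G unfolding A_def by measurable
  moreover have "incseq (\<lambda>N. A N \<inter> G)"
    unfolding incseq_def A_def using max_birkhoff_sum_mono by (fastforce intro: less_le_trans)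
  ultimately have "(\<lambda>N. measure M (A N \<inter> G)) \<longlonglongrightarrow> measure M G"
    using G finite_Lim_measure_incseq[of "\<lambda>N. A N \<inter> G"] by auto
  moreover have "measure M (A N \<inter> G) \<le> \<delta>" for N
    unfolding A_def using measure_max_birkhoff_sum_pos_le[OF \<open>prob_space M\<close> T inv G] \<delta> by simp
  ultimately have "measure M G \<le> \<delta>"
    by (intro LIMSEQ_le_const2) auto
  with pos show False
    by (simp add: \<delta>_def)
qed

section \<open>Invariant measures are carried by weakly almost periodic points\<close>

lemma compact_finite_ball_cover:
  fixes r :: real
  assumes "compact (UNIV :: 'a::metric_space set)" and "r > 0"
  obtains C where "finite C" and "(UNIV :: 'a set) \<subseteq> (\<Union>c\<in>C. ball c r)"
proof (rule compactE_image[OF assms(1), of UNIV "\<lambda>c. ball c r"])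
  show "UNIV \<subseteq> (\<Union>c\<in>UNIV. ball c r)"
    using assms(2) by auto
qed (auto intro: that)

lemma invariant_measuresD:
  fixes f :: "'a::metric_space \<Rightarrow> 'a"
  assumes cont: "continuous_on UNIV f" and fL: "f ` L \<subseteq> L" and \<mu>: "\<mu> \<in> invariant_measures f L"
  shows "sets \<mu> = sets (restrict_space borel L)" and "space \<mu> = L" and "prob_space \<mu>"
    and "f \<in> measurable \<mu> \<mu>" and "distr \<mu> \<mu> f = \<mu>"
proof -
  show sets: "sets \<mu> = sets (restrict_space borel L)" and "prob_space \<mu>"
    using \<mu> by (simp_all add: invariant_measures_def)
  then show space: "space \<mu> = L"
    using sets_eq_imp_space_eq[OF sets] by (simp add: space_restrict_space)
  have "f \<in> measurable (restrict_space borel L) (restrict_space borel L)"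
    using borel_measurable_continuous_onI[OF cont] fL by (intro measurable_restrict_space3) auto
  then show f: "f \<in> measurable \<mu> \<mu>"
    by (simp add: measurable_cong_sets[OF sets sets])
  show "distr \<mu> \<mu> f = \<mu>"
  proof (rule measure_eqI)
    fix A
    assume "A \<in> sets (distr \<mu> \<mu> f)"
    then show "emeasure (distr \<mu> \<mu> f) A = emeasure \<mu> A"
      using \<mu> space by (simp add: emeasure_distr[OF f] invariant_measures_def)
  qed simp
qed

lemma borel_measurable_restrict_space_sets:
  assumes "sets M = sets (restrict_space borel L)" and "g \<in> borel_measurable borel"
  shows "g \<in> borel_measurable M"
  using measurable_restrict_space1[OF assms(2), of L] by (simp add: measurable_cong_sets[OF assms(1)])

lemma positive_lower_density_iff_nat:
  "positive_lower_density S \<longleftrightarrow>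
     (\<exists>j N :: nat. \<forall>n\<ge>N. real n / real (Suc j) \<le> real (card (S \<inter> {0..<n})))"
proof
  assume "positive_lower_density S"
  then obtain c where "c > 0" and c: "\<forall>\<^sub>F n in sequentially. c * real n \<le> real (card (S \<inter> {0..<n}))"
    unfolding positive_lower_density_def by blast
  then obtain j :: nat where j: "1 / real (Suc j) < c"
    by (metis nat_approx_posE)
  have "\<forall>\<^sub>F n in sequentially. real n / real (Suc j) \<le> real (card (S \<inter> {0..<n}))"
    using c
  proof eventually_elim
    case (elim n)
    have "real n / real (Suc j) \<le> c * real n"
      using j mult_right_mono[of "1 / real (Suc j)" c "real n"] by simp
    with elim show ?case
      by linarith
  qed
  then show "\<exists>j N :: nat. \<forall>n\<ge>N. real n / real (Suc j) \<le> real (card (S \<inter> {0..<n}))"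
    unfolding eventually_sequentially by blast
next
  assume "\<exists>j N :: nat. \<forall>n\<ge>N. real n / real (Suc j) \<le> real (card (S \<inter> {0..<n}))"
  then obtain j N :: nat where "\<forall>n\<ge>N. 1 / real (Suc j) * real n \<le> real (card (S \<inter> {0..<n}))"
    by auto
  then show "positive_lower_density S"
    unfolding positive_lower_density_def eventually_sequentially
    by (intro exI[of _ "1 / real (Suc j)"]) auto
qed

lemma sets_positive_lower_density [measurable]:
  assumes [measurable]: "\<And>n. (\<lambda>z. real (card (S z \<inter> {0..<n}))) \<in> borel_measurable M"
  shows "{z\<in>space M. positive_lower_density (S z)} \<in> sets M"
  unfolding positive_lower_density_iff_nat by measurable

lemma continuous_on_funpow:
  fixes f :: "'a::topological_space \<Rightarrow> 'a"
  assumes "continuous_on UNIV f"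
  shows "continuous_on UNIV (f ^^ n)"
proof (induction n)
  case (Suc n)
  then show ?case
    using continuous_on_compose[OF Suc continuous_on_subset[OF assms]] by simp
qed (simp add: continuous_on_id)

lemma borel_measurable_card_visit_times:
  fixes f :: "'a::metric_space \<Rightarrow> 'a"
  assumes "continuous_on UNIV f"
  shows "(\<lambda>z. real (card (visit_times f z (ball z r) \<inter> {0..<n}))) \<in> borel_measurable borel"
proof -
  have "visit_times f z (ball z r) \<inter> {0..<n} = {i\<in>{1..<n}. dist z ((f ^^ i) z) < r}" for z
    by (auto simp: visit_times_def)
  then have card: "real (card (visit_times f z (ball z r) \<inter> {0..<n})) =
      (\<Sum>i\<in>{1..<n}. if dist z ((f ^^ i) z) < r then 1 else 0)" for z
    by (simp add: sum.If_cases Int_def)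
  have [measurable]: "(\<lambda>z. dist z ((f ^^ i) z)) \<in> borel_measurable borel" for i
    by (intro borel_measurable_continuous_onI continuous_intros continuous_on_funpow[OF assms])
  show ?thesis
    unfolding card by measurable
qed

lemma sets_positive_lower_density_visit_times:
  fixes f :: "'a::metric_space \<Rightarrow> 'a"
  assumes "continuous_on UNIV f" and "sets M = sets (restrict_space borel L)"
  shows "{z\<in>space M. positive_lower_density (visit_times f z (ball z r))} \<in> sets M"
  by (rule sets_positive_lower_density)
     (rule borel_measurable_restrict_space_sets[OF assms(2) borel_measurable_card_visit_times[OF assms(1)]])

lemma positive_lower_density_visit_times_if_returns:
  assumes dens: "positive_lower_density {i. (f ^^ i) z \<in> G}" and "z \<in> G" and G: "G \<subseteq> ball c (r / 2)"
  shows "positive_lower_density (visit_times f z (ball z r))"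
  using dens
proof (rule positive_lower_density_mono[where k = 1])
  fix n
  have "{i. (f ^^ i) z \<in> G} \<inter> {0..<n} \<subseteq> insert 0 (visit_times f z (ball z r) \<inter> {0..<n})"
  proof
    fix i
    assume i: "i \<in> {i. (f ^^ i) z \<in> G} \<inter> {0..<n}"
    then have "dist c z < r / 2" "dist c ((f ^^ i) z) < r / 2"
      using \<open>z \<in> G\<close> G by auto
    then have "dist z ((f ^^ i) z) < r"
      using dist_triangle[of z "(f ^^ i) z" c] by (simp add: dist_commute)
    with i show "i \<in> insert 0 (visit_times f z (ball z r) \<inter> {0..<n})"
      by (auto simp: visit_times_def)
  qed
  then have "card ({i. (f ^^ i) z \<in> G} \<inter> {0..<n}) \<le> card (insert 0 (visit_times f z (ball z r) \<inter> {0..<n}))"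
    by (intro card_mono) auto
  also have "\<dots> \<le> card (visit_times f z (ball z r) \<inter> {0..<n}) + 1"
    by (simp add: card_insert_if)
  finally show "card ({i. (f ^^ i) z \<in> G} \<inter> {0..<n}) \<le> card (visit_times f z (ball z r) \<inter> {0..<n}) + 1" .
qed

text \<open>Cut the set of points without positive-density returns to their \<open>r\<close>-balls into finitely many
  pieces of diameter less than \<open>r\<close>; by recurrence each piece is null.\<close>

lemma AE_positive_lower_density_visit_times:
  fixes f :: "'a::metric_space \<Rightarrow> 'a"
  assumes cpt: "compact (UNIV :: 'a set)" and cont: "continuous_on UNIV f" and fL: "f ` L \<subseteq> L"
    and \<mu>: "\<mu> \<in> invariant_measures f L" and "r > 0"
  shows "AE z in \<mu>. positive_lower_density (visit_times f z (ball z r))"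
proof -
  note \<mu>_props = invariant_measuresD[OF cont fL \<mu>]
  interpret prob_space \<mu>
    by (rule \<mu>_props(3))
  define E where "E = space \<mu> - {z\<in>space \<mu>. positive_lower_density (visit_times f z (ball z r))}"
  have E: "E \<in> sets \<mu>"
    unfolding E_def by (intro sets.compl_sets sets_positive_lower_density_visit_times[OF cont \<mu>_props(1)])
  have piece_sets: "E \<inter> ball c (r / 2) \<in> sets \<mu>" for c
  proof -
    have "ball c (r / 2) \<inter> L \<in> sets \<mu>"
      using \<mu>_props(1) by (auto simp: sets_restrict_space)
    moreover have "E \<inter> ball c (r / 2) = E \<inter> (ball c (r / 2) \<inter> L)"
      using sets.sets_into_space[OF E] \<mu>_props(2) by auto
    ultimately show ?thesis
      using E by simp
  qed
  have null: "E \<inter> ball c (r / 2) \<in> null_sets \<mu>" for c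
  proof (rule ccontr)
    assume "E \<inter> ball c (r / 2) \<notin> null_sets \<mu>"
    then have "measure \<mu> (E \<inter> ball c (r / 2)) > 0"
      using piece_sets[of c] by (simp add: null_sets_def emeasure_eq_measure zero_less_measure_iff)
    then obtain z where "z \<in> E \<inter> ball c (r / 2)"
      and "positive_lower_density {i. (f ^^ i) z \<in> E \<inter> ball c (r / 2)}"
      using positive_lower_density_recurrence[OF \<mu>_props(3-5) piece_sets] by blast
    then show False
      using positive_lower_density_visit_times_if_returns[of f z "E \<inter> ball c (r / 2)" c r]
      by (auto simp: E_def)
  qed
  obtain C :: "'a set" where C: "finite C" "UNIV \<subseteq> (\<Union>c\<in>C. ball c (r / 2))"
    by (rule compact_finite_ball_cover[OF cpt, where r = "r / 2"]) (use \<open>r > 0\<close> in auto)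
  have "(\<Union>c\<in>C. E \<inter> ball c (r / 2)) \<in> null_sets \<mu>"
    using C(1) null by (rule null_sets.finite_UN)
  moreover have "(\<Union>c\<in>C. E \<inter> ball c (r / 2)) = E"
    using C(2) by blast
  ultimately show ?thesis
    by (intro AE_I'[where N = E]) (auto simp: E_def)
qed

lemma AE_weakly_almost_periodic:
  fixes f :: "'a::metric_space \<Rightarrow> 'a"
  assumes cpt: "compact (UNIV :: 'a set)" and cont: "continuous_on UNIV f" and fL: "f ` L \<subseteq> L"
    and \<mu>: "\<mu> \<in> invariant_measures f L"
  shows "AE z in \<mu>. weakly_almost_periodic f z"
proof -
  have "AE z in \<mu>. \<forall>k::nat. positive_lower_density (visit_times f z (ball z (1 / Suc k)))"
    unfolding AE_all_countable
    using AE_positive_lower_density_visit_times[OF cpt cont fL \<mu>] by simp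
  then show ?thesis
  proof eventually_elim
    case (elim z)
    show ?case
      unfolding weakly_almost_periodic_def
    proof (intro allI impI)
      fix \<epsilon> :: real
      assume "\<epsilon> > 0"
      then obtain k :: nat where "1 / Suc k < \<epsilon>"
        by (metis nat_approx_posE)
      then have "visit_times f z (ball z (1 / Suc k)) \<subseteq> visit_times f z (ball z \<epsilon>)"
        by (intro visit_times_mono subset_ball) simp
      with elim[rule_format, of k] show "positive_lower_density (visit_times f z (ball z \<epsilon>))"
        by (rule positive_lower_density_subset)
    qed
  qed
qed

section \<open>Coding a compact metric space into the unit interval\<close>

definition ternary_code :: "(nat \<Rightarrow> bool) \<Rightarrow> real" where
  "ternary_code P = (\<Sum>m. if P m then 2 / 3 ^ Suc m else 0)"

lemma sums_ternary_weights: "(\<lambda>n. 2 / 3 ^ Suc (n + k) :: real) sums (1 / 3 ^ k)"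
proof -
  have "(\<lambda>n. (2 / 3 ^ Suc k) * (1 / 3) ^ n :: real) sums ((2 / 3 ^ Suc k) * (1 / (1 - 1 / 3)))"
    by (intro sums_mult geometric_sums) simp
  then show ?thesis
    by (simp add: power_add field_simps)
qed

lemma sums_ternary_weights_0: "(\<lambda>m. 2 / 3 ^ Suc m :: real) sums 1"
  using sums_ternary_weights[of 0] by simp

lemma summable_ternary_code: "summable (\<lambda>m. if P m then 2 / 3 ^ Suc m else 0 :: real)"
  by (rule summable_comparison_test'[OF sums_summable[OF sums_ternary_weights_0], of 0]) simp

lemma ternary_code_bounds: "0 \<le> ternary_code P" "ternary_code P \<le> 1"
proof -
  show "0 \<le> ternary_code P"
    unfolding ternary_code_def by (intro suminf_nonneg summable_ternary_code) simp
  have "ternary_code P \<le> (\<Sum>m. 2 / 3 ^ Suc m)"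
    unfolding ternary_code_def
    by (intro suminf_le summable_ternary_code sums_summable[OF sums_ternary_weights_0]) simp
  also have "\<dots> = 1"
    using sums_unique[OF sums_ternary_weights_0] by simp
  finally show "ternary_code P \<le> 1" .
qed

text \<open>The first disagreeing digit \<open>m\<close> contributes \<open>2 / 3^(m+1)\<close>, while all later digits
  together weigh only \<open>1 / 3^(m+1)\<close>.\<close>

lemma ternary_code_agree:
  assumes "\<bar>ternary_code P - ternary_code Q\<bar> < 1 / 3 ^ Suc M"
  shows "\<forall>m\<le>M. P m = Q m"
proof (rule ccontr)
  assume "\<not> ?thesis"
  then have ex: "\<exists>m. m \<le> M \<and> P m \<noteq> Q m"
    by blast
  define m0 where "m0 = (LEAST m. m \<le> M \<and> P m \<noteq> Q m)"
  have m0: "m0 \<le> M" "P m0 \<noteq> Q m0"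
    using LeastI_ex[OF ex] by (auto simp: m0_def)
  have below: "P j = Q j" if "j < m0" for j
    using not_less_Least[of j "\<lambda>m. m \<le> M \<and> P m \<noteq> Q m"] that m0(1) by (auto simp: m0_def)
  define d where "d m = (if P m then 2 / 3 ^ Suc m else 0) - (if Q m then 2 / 3 ^ Suc m else 0 :: real)" for m
  have "summable d"
    unfolding d_def by (intro summable_diff summable_ternary_code)
  have "ternary_code P - ternary_code Q = (\<Sum>m. d m)"
    unfolding ternary_code_def d_def by (rule suminf_diff) (rule summable_ternary_code)+
  also have "\<dots> = (\<Sum>n. d (n + Suc m0)) + sum d {..<Suc m0}"
    by (rule suminf_split_initial_segment[OF \<open>summable d\<close>])
  also have "sum d {..<Suc m0} = d m0"
    using below by (simp add: d_def)
  finally have split: "ternary_code P - ternary_code Q = (\<Sum>n. d (n + Suc m0)) + d m0" .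
  have "norm (d (n + Suc m0)) \<le> 2 / 3 ^ Suc (n + Suc m0)" for n
    by (simp add: d_def)
  then have "norm (\<Sum>n. d (n + Suc m0)) \<le> (\<Sum>n. 2 / 3 ^ Suc (n + Suc m0))"
    by (rule norm_suminf_le[OF _ sums_summable[OF sums_ternary_weights]])
  also have "\<dots> = 1 / 3 ^ Suc m0"
    by (rule sums_unique[OF sums_ternary_weights, symmetric])
  finally have tail: "\<bar>\<Sum>n. d (n + Suc m0)\<bar> \<le> 1 / 3 ^ Suc m0"
    by (simp only: real_norm_def)
  have "\<bar>d m0\<bar> = 2 / 3 ^ Suc m0"
    using m0(2) by (auto simp: d_def)
  then have "1 / 3 ^ Suc m0 \<le> \<bar>ternary_code P - ternary_code Q\<bar>"
    using split tail by linarith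
  moreover have "1 / (3::real) ^ Suc M \<le> 1 / 3 ^ Suc m0"
    using m0(1) by (intro divide_left_mono power_increasing) auto
  ultimately show False
    using assms by linarith
qed

definition uniformly_continuous_inverse :: "('a::metric_space \<Rightarrow> real) \<Rightarrow> bool" where
  "uniformly_continuous_inverse \<theta> \<longleftrightarrow>
     (\<forall>e>0. \<exists>\<delta>>0. \<forall>z z'. \<bar>\<theta> z - \<theta> z'\<bar> < \<delta> \<longrightarrow> dist z z' < e)"

lemma uniformly_continuous_inverse_ternary_code:
  fixes b :: "nat \<Rightarrow> 'a::metric_space set"
  assumes small: "\<And>e. e > 0 \<Longrightarrow> \<exists>M. \<forall>z. \<exists>m\<le>M. z \<in> b m \<and> (\<forall>z'\<in>b m. dist z z' < e)"
  shows "uniformly_continuous_inverse (\<lambda>z. ternary_code (\<lambda>m. z \<in> b m))"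
  unfolding uniformly_continuous_inverse_def
proof (intro allI impI)
  fix e :: real
  assume "e > 0"
  then obtain M where M: "\<forall>z. \<exists>m\<le>M. z \<in> b m \<and> (\<forall>z'\<in>b m. dist z z' < e)"
    using small by blast
  show "\<exists>\<delta>>0. \<forall>z z'. \<bar>ternary_code (\<lambda>m. z \<in> b m) - ternary_code (\<lambda>m. z' \<in> b m)\<bar> < \<delta> \<longrightarrow> dist z z' < e"
  proof (intro exI[of _ "1 / 3 ^ Suc M"] conjI allI impI)
    fix z z'
    assume "\<bar>ternary_code (\<lambda>m. z \<in> b m) - ternary_code (\<lambda>m. z' \<in> b m)\<bar> < 1 / 3 ^ Suc M"
    then have "\<forall>m\<le>M. (z \<in> b m) = (z' \<in> b m)"
      by (rule ternary_code_agree)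
    with M show "dist z z' < e"
      by blast
  qed simp
qed

text \<open>Enumerate balls forming \<open>1/(k+1)\<close>-nets for all \<open>k\<close>: each net occupies finitely many indices.\<close>

lemma compact_uniformly_continuous_inverse_code:
  assumes cpt: "compact (UNIV :: 'a set)"
  obtains \<theta> :: "'a::metric_space \<Rightarrow> real" where "\<And>z. 0 \<le> \<theta> z" "\<And>z. \<theta> z \<le> 1"
    "uniformly_continuous_inverse \<theta>"
proof -
  have "\<forall>k. \<exists>C. finite C \<and> (UNIV :: 'a set) \<subseteq> (\<Union>c\<in>C. ball c (1 / real (Suc k)))"
    using compact_finite_ball_cover[OF cpt] by (metis of_nat_0_less_iff zero_less_Suc zero_less_divide_1_iff)
  then obtain C :: "nat \<Rightarrow> 'a set"
    where C: "\<And>k. finite (C k)" "\<And>k. UNIV \<subseteq> (\<Union>c\<in>C k. ball c (1 / real (Suc k)))"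
    by metis
  define B where "B = (\<Union>k. (\<lambda>c. ball c (1 / real (Suc k))) ` C k)"
  have "countable B"
    unfolding B_def by (intro countable_UN countable_image) (auto intro: countable_finite C(1))
  define b where "b = from_nat_into B"
  have "\<exists>M. \<forall>z. \<exists>m\<le>M. z \<in> b m \<and> (\<forall>z'\<in>b m. dist z z' < e)" if "e > 0" for e
  proof -
    obtain k :: nat where k: "1 / real (Suc k) < e / 2"
      using \<open>e > 0\<close> by (metis half_gt_zero nat_approx_posE)
    let ?r = "1 / real (Suc k)"
    define M where "M = Max (to_nat_on B ` (\<lambda>c. ball c ?r) ` C k)"
    have "\<exists>m\<le>M. z \<in> b m \<and> (\<forall>z'\<in>b m. dist z z' < e)" for z
    proof -
      obtain c where c: "c \<in> C k" "z \<in> ball c ?r"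
        using C(2)[of k] by blast
      define m where "m = to_nat_on B (ball c ?r)"
      have "ball c ?r \<in> B"
        unfolding B_def using c(1) by blast
      then have "b m = ball c ?r"
        unfolding b_def m_def using \<open>countable B\<close> by (rule from_nat_into_to_nat_on[rotated])
      moreover have "m \<le> M"
        unfolding M_def m_def using c(1) C(1) by (intro Max_ge) auto
      moreover have "dist z z' < e" if "z' \<in> ball c ?r" for z'
        using that c(2) dist_triangle[of z z' c] k by (simp add: dist_commute)
      ultimately show ?thesis
        using c(2) by metis
    qed
    then show ?thesis
      by blast
  qed
  then have "uniformly_continuous_inverse (\<lambda>z. ternary_code (\<lambda>m. z \<in> b m))"
    by (rule uniformly_continuous_inverse_ternary_code)
  with ternary_code_bounds show thesis
    by (intro that) auto
qed

definition code_limit :: "('a::metric_space \<Rightarrow> real) \<Rightarrow> real \<Rightarrow> 'a \<Rightarrow> bool" where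
  "code_limit \<theta> t z \<longleftrightarrow> (\<forall>e>0. \<exists>\<delta>>0. \<forall>w. \<bar>\<theta> w - t\<bar> < \<delta> \<longrightarrow> dist w z < e)"

text \<open>Outside the closure of the range of \<open>\<theta>\<close>, \<open>decode \<theta>\<close> is an arbitrary choice.\<close>

definition decode :: "('a::metric_space \<Rightarrow> real) \<Rightarrow> real \<Rightarrow> 'a" where
  "decode \<theta> t = (SOME z. code_limit \<theta> t z)"

context
  fixes \<theta> :: "'a::metric_space \<Rightarrow> real"
  assumes cpt: "compact (UNIV :: 'a set)" and inv: "uniformly_continuous_inverse \<theta>"
begin

lemma code_limit_decode:
  assumes t: "t \<in> closure (range \<theta>)"
  shows "code_limit \<theta> t (decode \<theta> t)"
proof -
  obtain s where s: "\<And>n. s n \<in> range \<theta>" "s \<longlonglongrightarrow> t"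
    using t unfolding closure_sequential by blast
  define w where "w n = inv \<theta> (s n)" for n
  have w: "(\<lambda>n. \<theta> (w n)) \<longlonglongrightarrow> t"
    using s by (simp add: w_def f_inv_into_f)
  obtain l r where r: "strict_mono r" "(w \<circ> r) \<longlonglongrightarrow> l"
    using seq_compactE[OF compact_imp_seq_compact[OF cpt], of w] by blast
  have wr: "(\<lambda>k. \<theta> (w (r k))) \<longlonglongrightarrow> t"
    using LIMSEQ_subseq_LIMSEQ[OF w r(1)] by (simp add: comp_def)
  have "code_limit \<theta> t l"
    unfolding code_limit_def
  proof (intro allI impI)
    fix e :: real
    assume "e > 0"
    then obtain \<delta> where \<delta>: "\<delta> > 0" "\<And>z z'. \<bar>\<theta> z - \<theta> z'\<bar> < \<delta> \<Longrightarrow> dist z z' < e / 2"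
      using inv unfolding uniformly_continuous_inverse_def by (meson half_gt_zero)
    obtain K1 where K1: "\<And>k. k \<ge> K1 \<Longrightarrow> dist (\<theta> (w (r k))) t < \<delta> / 2"
      using metric_LIMSEQ_D[OF wr, of "\<delta> / 2"] \<delta>(1) by auto
    obtain K2 where K2: "\<And>k. k \<ge> K2 \<Longrightarrow> dist ((w \<circ> r) k) l < e / 2"
      using metric_LIMSEQ_D[OF r(2), of "e / 2"] \<open>e > 0\<close> by auto
    define k where "k = max K1 K2"
    show "\<exists>\<delta>>0. \<forall>w'. \<bar>\<theta> w' - t\<bar> < \<delta> \<longrightarrow> dist w' l < e"
    proof (intro exI[of _ "\<delta> / 2"] conjI allI impI)
      fix w'
      assume "\<bar>\<theta> w' - t\<bar> < \<delta> / 2"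
      moreover have "\<bar>\<theta> (w (r k)) - t\<bar> < \<delta> / 2"
        using K1[of k] by (simp add: k_def dist_real_def)
      ultimately have "dist w' (w (r k)) < e / 2"
        by (intro \<delta>(2)) linarith
      moreover have "dist (w (r k)) l < e / 2"
        using K2[of k] by (simp add: k_def)
      ultimately show "dist w' l < e"
        using dist_triangle[of w' l "w (r k)"] by linarith
    qed (use \<delta>(1) in simp)
  qed
  then show ?thesis
    unfolding decode_def by (rule someI)
qed

lemma decode_code [simp]: "decode \<theta> (\<theta> z) = z"
proof -
  have "code_limit \<theta> (\<theta> z) (decode \<theta> (\<theta> z))"
    by (rule code_limit_decode) (simp add: closure_subset[THEN subsetD])
  then have "dist z (decode \<theta> (\<theta> z)) < e" if "e > 0" for e
    using that unfolding code_limit_def by fastforce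
  from this[of "dist z (decode \<theta> (\<theta> z))"] show ?thesis
    by force
qed

lemma continuous_on_decode: "continuous_on (closure (range \<theta>)) (decode \<theta>)"
  unfolding continuous_on_iff
proof (intro ballI allI impI)
  fix t e
  assume t: "t \<in> closure (range \<theta>)" and "(e::real) > 0"
  then obtain \<delta> where \<delta>: "\<delta> > 0" "\<And>w. \<bar>\<theta> w - t\<bar> < \<delta> \<Longrightarrow> dist w (decode \<theta> t) < e / 2"
    using code_limit_decode[OF t] unfolding code_limit_def by (meson half_gt_zero)
  show "\<exists>d>0. \<forall>t'\<in>closure (range \<theta>). dist t' t < d \<longrightarrow> dist (decode \<theta> t') (decode \<theta> t) < e"
  proof (intro exI[of _ "\<delta> / 2"] conjI ballI impI)
    fix t'
    assume t': "t' \<in> closure (range \<theta>)" "dist t' t < \<delta> / 2"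
    obtain \<delta>' where \<delta>': "\<delta>' > 0" "\<And>w. \<bar>\<theta> w - t'\<bar> < \<delta>' \<Longrightarrow> dist w (decode \<theta> t') < e / 2"
      using code_limit_decode[OF t'(1)] \<open>e > 0\<close> unfolding code_limit_def by (meson half_gt_zero)
    have "min \<delta>' (\<delta> / 2) > 0"
      using \<delta>(1) \<delta>'(1) by simp
    then obtain w where w: "dist (\<theta> w) t' < min \<delta>' (\<delta> / 2)"
      using t'(1) unfolding closure_approachable by blast
    then have "dist (\<theta> w) t < \<delta>"
      using t'(2) by (auto simp: dist_commute intro: dist_triangle_half_l[of _ t'])
    then have "dist w (decode \<theta> t) < e / 2"
      by (intro \<delta>(2)) (simp add: dist_real_def)
    moreover have "dist w (decode \<theta> t') < e / 2"
      using w by (intro \<delta>'(2)) (simp add: dist_real_def)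
    ultimately show "dist (decode \<theta> t') (decode \<theta> t) < e"
      using dist_triangle[of "decode \<theta> t'" "decode \<theta> t" w] by (simp add: dist_commute)
  qed (use \<delta>(1) in simp)
qed

lemma decode_in_closure:
  assumes t: "t \<in> closure (\<theta> ` L)"
  shows "decode \<theta> t \<in> closure L"
  unfolding closure_approachable
proof (intro allI impI)
  fix e :: real
  assume "e > 0"
  have "t \<in> closure (range \<theta>)"
    using t closure_mono[of "\<theta> ` L" "range \<theta>"] by auto
  then obtain \<delta> where \<delta>: "\<delta> > 0" "\<And>w. \<bar>\<theta> w - t\<bar> < \<delta> \<Longrightarrow> dist w (decode \<theta> t) < e"
    using code_limit_decode \<open>e > 0\<close> unfolding code_limit_def by blast
  obtain w where "w \<in> L" "dist (\<theta> w) t < \<delta>"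
    using t \<delta>(1) unfolding closure_approachable by blast
  then show "\<exists>y\<in>L. dist y (decode \<theta> t) < e"
    using \<delta>(2)[of w] by (auto simp: dist_real_def)
qed

end

section \<open>Cutoffs of closed sets and weak convergence\<close>

definition closed_cutoff :: "'a::metric_space set \<Rightarrow> nat \<Rightarrow> 'a \<Rightarrow> real" where
  "closed_cutoff F j t = max 0 (1 - real (Suc j) * infdist t F)"

lemma continuous_on_closed_cutoff: "continuous_on UNIV (closed_cutoff F j)"
  unfolding closed_cutoff_def[abs_def] by (intro continuous_intros continuous_on_infdist continuous_on_id)

lemma borel_measurable_closed_cutoff [measurable]: "closed_cutoff F j \<in> borel_measurable borel"
  by (rule borel_measurable_continuous_onI[OF continuous_on_closed_cutoff])

lemma closed_cutoff_bounds: "0 \<le> closed_cutoff F j t" "closed_cutoff F j t \<le> 1"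
  unfolding closed_cutoff_def using infdist_nonneg[of t F] by auto

lemma abs_closed_cutoff_le: "\<bar>closed_cutoff F j t\<bar> \<le> 1"
  using closed_cutoff_bounds[of F j t] by simp

lemma indicator_le_closed_cutoff: "indicator F t \<le> closed_cutoff F j t"
  using closed_cutoff_bounds[of F j t] by (cases "t \<in> F") (auto simp: closed_cutoff_def indicator_def)

lemma closed_cutoff_tendsto:
  assumes "closed F" "F \<noteq> {}"
  shows "(\<lambda>j. closed_cutoff F j t) \<longlonglongrightarrow> indicator F t"
proof (cases "t \<in> F")
  case True
  then show ?thesis
    by (simp add: closed_cutoff_def indicator_def)
next
  case False
  then have pos: "infdist t F > 0"
    using infdist_pos_not_in_closed assms by blast
  obtain J :: nat where J: "1 / infdist t F < real J"
    using reals_Archimedean2 by blast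
  have "closed_cutoff F j t = 0" if "J \<le> j" for j
  proof -
    have "1 / infdist t F < real (Suc j)"
      using J that by linarith
    then show ?thesis
      using pos by (simp add: closed_cutoff_def field_simps)
  qed
  then have "(\<lambda>j. closed_cutoff F j t) \<longlonglongrightarrow> 0"
    by (intro tendsto_eventually) (auto simp: eventually_sequentially)
  with False show ?thesis
    by simp
qed

lemma integral_closed_cutoff_tendsto:
  assumes "finite_measure N" and F: "closed F" "F \<noteq> {}" "F \<inter> space N \<in> sets N"
    and [measurable]: "\<And>j. closed_cutoff F j \<in> borel_measurable N"
  shows "(\<lambda>j. integral\<^sup>L N (closed_cutoff F j)) \<longlonglongrightarrow> measure N (F \<inter> space N)"
proof -
  interpret finite_measure N by fact
  have "(\<lambda>j. integral\<^sup>L N (closed_cutoff F j)) \<longlonglongrightarrow> (\<integral>t. indicator (F \<inter> space N) t \<partial>N)"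
  proof (rule integral_dominated_convergence[where w = "\<lambda>_. 1"])
    show "indicator (F \<inter> space N) \<in> borel_measurable N"
      using F(3) by measurable
    have "(\<lambda>j. closed_cutoff F j t) \<longlonglongrightarrow> indicator (F \<inter> space N) t" if "t \<in> space N" for t
      using closed_cutoff_tendsto[OF F(1,2), of t] that by (simp add: indicator_def)
    then show "AE t in N. (\<lambda>j. closed_cutoff F j t) \<longlonglongrightarrow> indicator (F \<inter> space N) t"
      by simp
  qed (simp_all add: abs_closed_cutoff_le)
  then show ?thesis
    using F(3) by (simp add: less_top[symmetric])
qed

lemma real_distribution_borel_measurable:
  "real_distribution M \<Longrightarrow> g \<in> borel_measurable borel \<Longrightarrow> g \<in> borel_measurable M"
  using measurable_cong_sets[OF real_distribution.events_eq_borel refl, of M borel] by blast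

lemma (in real_distribution) measure_le_integral_closed_cutoff:
  assumes "closed F"
  shows "measure M F \<le> integral\<^sup>L M (closed_cutoff F j)"
proof -
  have "measure M F = (\<integral>t. indicator F t \<partial>M)"
    using assms by (simp add: less_top[symmetric])
  also have "\<dots> \<le> integral\<^sup>L M (closed_cutoff F j)"
  proof (rule integral_mono)
    show "integrable M (indicator F :: real \<Rightarrow> real)"
      using assms by (simp add: less_top[symmetric])
    show "integrable M (closed_cutoff F j)"
      using borel_measurable_closed_cutoff[of F j]
      by (intro integrable_const_bound[where B = 1])
         (simp_all add: abs_closed_cutoff_le measurable_cong_sets[OF events_eq_borel refl])
  qed (rule indicator_le_closed_cutoff)
  finally show ?thesis .
qed

text \<open>The closed-set half of the portmanteau theorem.\<close>

lemma weak_conv_closed_lower_bound: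
  fixes \<mu>s :: "nat \<Rightarrow> real measure"
  assumes \<mu>s: "\<And>n. real_distribution (\<mu>s n)" and M: "real_distribution M" and W: "weak_conv_m \<mu>s M"
    and F: "closed F" and ev: "\<forall>\<^sub>F n in sequentially. c \<le> measure (\<mu>s n) F"
  shows "c \<le> measure M F"
proof (cases "F = {}")
  case True
  with ev have "\<forall>\<^sub>F n in sequentially. c \<le> 0"
    by simp
  then have "c \<le> 0"
    by (auto simp: eventually_sequentially)
  with True show ?thesis
    by simp
next
  case False
  interpret M: real_distribution M by fact
  have "c \<le> integral\<^sup>L M (closed_cutoff F j)" for j
  proof (rule tendsto_lowerbound)
    show "(\<lambda>n. integral\<^sup>L (\<mu>s n) (closed_cutoff F j)) \<longlonglongrightarrow> integral\<^sup>L M (closed_cutoff F j)"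
      using continuous_on_closed_cutoff[of F j]
      by (intro weak_conv_imp_integral_bdd_continuous_conv[OF \<mu>s M W, where B = 1])
         (simp_all add: continuous_on_eq_continuous_at abs_closed_cutoff_le)
    show "\<forall>\<^sub>F n in sequentially. c \<le> integral\<^sup>L (\<mu>s n) (closed_cutoff F j)"
      using ev
    proof eventually_elim
      case (elim n)
      then show ?case
        using real_distribution.measure_le_integral_closed_cutoff[OF \<mu>s F, of n j] by linarith
    qed
  qed simp
  moreover have "(\<lambda>j. integral\<^sup>L M (closed_cutoff F j)) \<longlonglongrightarrow> measure M F"
    using integral_closed_cutoff_tendsto[OF M.finite_measure_axioms F False] F
      real_distribution_borel_measurable[OF M borel_measurable_closed_cutoff] by simp
  ultimately show ?thesis
    by (intro tendsto_lowerbound) auto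
qed

definition empirical_distribution :: "(nat \<Rightarrow> real) \<Rightarrow> nat \<Rightarrow> real measure" where
  "empirical_distribution p n = distr (uniform_count_measure {..n}) borel p"

lemma measurable_uniform_count_measure_iff:
  "p \<in> measurable (uniform_count_measure A) N \<longleftrightarrow> p \<in> A \<rightarrow> space N"
proof -
  have "measurable (uniform_count_measure A) N = measurable (count_space A) N"
    by (rule measurable_cong_sets) (simp_all add: sets_uniform_count_measure)
  then show ?thesis
    by simp
qed

lemma real_distribution_empirical_distribution: "real_distribution (empirical_distribution p n)"
proof -
  interpret prob_space "uniform_count_measure {..n}"
    by (rule prob_space_uniform_count_measure) auto
  have "prob_space (empirical_distribution p n)"
    unfolding empirical_distribution_def
    by (rule prob_space_distr) (simp add: measurable_uniform_count_measure_iff)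
  then show ?thesis
    unfolding real_distribution_def real_distribution_axioms_def
    by (simp add: empirical_distribution_def)
qed

lemma integral_empirical_distribution:
  assumes "g \<in> borel_measurable borel"
  shows "integral\<^sup>L (empirical_distribution p n) g = (\<Sum>i\<le>n. g (p i)) / real (Suc n)"
proof -
  have "integral\<^sup>L (empirical_distribution p n) g = (\<integral>i. g (p i) \<partial>uniform_count_measure {..n})"
    unfolding empirical_distribution_def
    by (rule integral_distr) (simp_all add: measurable_uniform_count_measure_iff assms)
  then show ?thesis
    by (simp add: integral_uniform_count_measure)
qed

lemma measure_empirical_distribution:
  assumes "B \<in> sets borel"
  shows "measure (empirical_distribution p n) B = real (card {i\<in>{..n}. p i \<in> B}) / real (Suc n)"
proof -
  have "measure (empirical_distribution p n) B = measure (uniform_count_measure {..n}) (p -` B \<inter> {..n})"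
    unfolding empirical_distribution_def
    by (subst measure_distr)
       (simp_all add: measurable_uniform_count_measure_iff assms space_uniform_count_measure)
  also have "p -` B \<inter> {..n} = {i\<in>{..n}. p i \<in> B}"
    by auto
  also have "measure (uniform_count_measure {..n}) {i\<in>{..n}. p i \<in> B} =
      real (card {i\<in>{..n}. p i \<in> B}) / real (Suc n)"
    by (subst measure_uniform_count_measure) auto
  finally show ?thesis .
qed

lemma tight_empirical_distribution:
  assumes "\<And>i. \<bar>p i\<bar> \<le> B"
  shows "tight (empirical_distribution p)"
  unfolding tight_def
proof (intro conjI allI impI)
  show "real_distribution (empirical_distribution p n)" for n
    by (rule real_distribution_empirical_distribution)
  fix e :: real
  assume "e > 0"
  have "p i \<in> {- B - 1<..B}" for i
    using assms[of i] by auto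
  then have "measure (empirical_distribution p n) {- B - 1<..B} = 1" for n
    by (simp add: measure_empirical_distribution)
  moreover have "- B - 1 < B"
    using assms[of 0] by linarith
  ultimately show "\<exists>a b. a < b \<and> (\<forall>n. 1 - e < measure (empirical_distribution p n) {a<..b})"
    using \<open>e > 0\<close> by (intro exI[of _ "- B - 1"] exI[of _ B]) auto
qed

lemma sets_restrict_space_borel_closed:
  fixes L :: "'a::metric_space set"
  assumes "closed L"
  shows "sets (restrict_space borel L) = sigma_sets L ((\<inter>) L ` Collect closed)"
proof -
  have borel: "sets (borel :: 'a measure) = sigma_sets UNIV (Collect closed)"
    by (subst borel_eq_closed) (simp add: sets_measure_of)
  have "sets (restrict_space borel L) = (\<inter>) L ` sets borel"
    by (simp add: sets_restrict_space)
  also have "\<dots> = sigma_sets L ((\<inter>) L ` Collect closed)"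
    unfolding borel by (rule sigma_sets_Int) (use assms borel in \<open>auto intro: sigma_sets.Basic\<close>)
  finally show ?thesis .
qed

text \<open>Integrals of the cutoffs determine the measures of closed sets, which generate the Borel
  sets.\<close>

lemma finite_measure_eqI_integral_continuous:
  fixes L :: "'a::metric_space set"
  assumes L: "closed L" and "finite_measure M" "finite_measure N"
    and sets_M: "sets M = sets (restrict_space borel L)" and sets_N: "sets N = sets (restrict_space borel L)"
    and eq: "\<And>\<phi> :: 'a \<Rightarrow> real. continuous_on UNIV \<phi> \<Longrightarrow> (\<And>z. 0 \<le> \<phi> z \<and> \<phi> z \<le> 1) \<Longrightarrow>
      integral\<^sup>L M \<phi> = integral\<^sup>L N \<phi>"
  shows "M = N"
proof -
  interpret M: finite_measure M by fact
  interpret N: finite_measure N by fact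
  have space: "space M = L" "space N = L"
    using sets_eq_imp_space_eq[OF sets_M] sets_eq_imp_space_eq[OF sets_N]
    by (simp_all add: space_restrict_space)
  have closed_sets: "F \<inter> L \<in> sets M" "F \<inter> L \<in> sets N" if "closed F" for F
    using that sets_M sets_N by (auto simp: sets_restrict_space)
  have "measure M (F \<inter> L) = measure N (F \<inter> L)" if F: "closed F" for F
  proof (cases "F = {}")
    case False
    have "(\<lambda>j. integral\<^sup>L M (closed_cutoff F j)) \<longlonglongrightarrow> measure M (F \<inter> L)"
      using integral_closed_cutoff_tendsto[OF \<open>finite_measure M\<close> F False] closed_sets[OF F] space
        borel_measurable_restrict_space_sets[OF sets_M borel_measurable_closed_cutoff] by simp
    moreover have "(\<lambda>j. integral\<^sup>L N (closed_cutoff F j)) \<longlonglongrightarrow> measure N (F \<inter> L)"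
      using integral_closed_cutoff_tendsto[OF \<open>finite_measure N\<close> F False] closed_sets[OF F] space
        borel_measurable_restrict_space_sets[OF sets_N borel_measurable_closed_cutoff] by simp
    moreover have "integral\<^sup>L M (closed_cutoff F j) = integral\<^sup>L N (closed_cutoff F j)" for j
      using closed_cutoff_bounds[of F j] by (intro eq continuous_on_closed_cutoff) auto
    ultimately show ?thesis
      using LIMSEQ_unique by force
  qed simp
  then have "emeasure M X = emeasure N X" if "X \<in> (\<inter>) L ` Collect closed" for X
    using that closed_sets by (auto simp: M.emeasure_eq_measure N.emeasure_eq_measure Int_commute)
  moreover have "Int_stable ((\<inter>) L ` Collect closed)"
  proof (rule Int_stableI)
    fix F1 F2
    assume "F1 \<in> (\<inter>) L ` Collect closed" "F2 \<in> (\<inter>) L ` Collect closed"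
    then obtain C1 C2 where "closed C1" "closed C2" "F1 = L \<inter> C1" "F2 = L \<inter> C2"
      by auto
    then show "F1 \<inter> F2 \<in> (\<inter>) L ` Collect closed"
      by (intro image_eqI[of _ _ "C1 \<inter> C2"]) auto
  qed
  ultimately show ?thesis
    using sets_M sets_N sets_restrict_space_borel_closed[OF L]
    by (intro measure_eqI_generator_eq[where \<Omega> = L and A = "\<lambda>_. L"])
       (auto intro!: image_eqI[where x = UNIV])
qed

section \<open>The Krylov--Bogolyubov construction\<close>

lemma average_shift_le:
  fixes \<phi> :: "'a \<Rightarrow> real"
  assumes "\<And>z. 0 \<le> \<phi> z \<and> \<phi> z \<le> 1"
  shows "\<bar>(\<Sum>i\<le>n. \<phi> ((f ^^ i) (f y))) / real (Suc n) - (\<Sum>i\<le>n. \<phi> ((f ^^ i) y)) / real (Suc n)\<bar>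
    \<le> 1 / real (Suc n)"
proof -
  have "(\<Sum>i\<le>Suc n. \<phi> ((f ^^ i) y)) = \<phi> y + (\<Sum>i\<le>n. \<phi> ((f ^^ i) (f y)))"
    by (subst sum.atMost_Suc_shift) (simp add: funpow_Suc_right del: funpow.simps)
  then have "(\<Sum>i\<le>n. \<phi> ((f ^^ i) (f y))) - (\<Sum>i\<le>n. \<phi> ((f ^^ i) y)) = \<phi> ((f ^^ Suc n) y) - \<phi> y"
    by simp
  moreover have "\<bar>\<phi> ((f ^^ Suc n) y) - \<phi> y\<bar> \<le> 1"
    using assms[of y] assms[of "(f ^^ Suc n) y"] by linarith
  ultimately have "\<bar>(\<Sum>i\<le>n. \<phi> ((f ^^ i) (f y))) - (\<Sum>i\<le>n. \<phi> ((f ^^ i) y))\<bar> / real (Suc n)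
      \<le> 1 / real (Suc n)"
    by (intro divide_right_mono) auto
  then show ?thesis
    by (simp add: diff_divide_distrib[symmetric])
qed

lemma positive_lower_density_averages:
  assumes "positive_lower_density S"
  obtains c :: real where "c > 0" "\<forall>\<^sub>F n in sequentially. c \<le> real (card {i\<in>{..n}. i \<in> S}) / real (Suc n)"
proof -
  obtain c where c: "c > 0" "\<forall>\<^sub>F n in sequentially. c * real n \<le> real (card (S \<inter> {0..<n}))"
    using assms unfolding positive_lower_density_def by blast
  have "\<forall>\<^sub>F n in sequentially. c / 2 \<le> real (card {i\<in>{..n}. i \<in> S}) / real (Suc n)"
    using c(2) eventually_ge_at_top[of 1]
  proof eventually_elim
    case (elim n)
    have "card (S \<inter> {0..<n}) \<le> card {i\<in>{..n}. i \<in> S}"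
      by (intro card_mono) auto
    with elim(1) have "c * real n \<le> real (card {i\<in>{..n}. i \<in> S})"
      by linarith
    moreover have "c / 2 \<le> c * real n / real (Suc n)"
      using c(1) elim(2) by (simp add: field_simps)
    ultimately show ?case
      by (smt (verit) divide_right_mono of_nat_0_le_iff)
  qed
  with c(1) show thesis
    by (intro that[of "c / 2"]) auto
qed

text \<open>The Krylov--Bogolyubov construction is carried out on the real line, where Helly's selection
  theorem is available: the orbit of \<open>y\<close> is coded into \<open>[0, 1]\<close> by \<open>\<theta>\<close>, a weak limit \<open>\<sigma>\<close> of a
  subsequence of its empirical distributions lives on the closure of the code of \<open>L\<close>, and the
  continuous decoding map carries \<open>\<sigma>\<close> back to an invariant measure on \<open>L\<close>.\<close>

context
  fixes f :: "'a::metric_space \<Rightarrow> 'a" and L :: "'a set" and y :: 'a and \<theta> :: "'a \<Rightarrow> real"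
    and r :: "nat \<Rightarrow> nat" and \<sigma> :: "real measure"
  assumes cpt: "compact (UNIV :: 'a set)" and cont: "continuous_on UNIV f"
    and L: "closed L" and fL: "f ` L \<subseteq> L" and yL: "y \<in> L"
    and \<theta>: "uniformly_continuous_inverse \<theta>"
    and r: "strict_mono r" and \<sigma>: "real_distribution \<sigma>"
    and weak_conv: "weak_conv_m (\<lambda>k. empirical_distribution (\<lambda>i. \<theta> ((f ^^ i) y)) (r k)) \<sigma>"
begin

interpretation \<sigma>: real_distribution \<sigma>
  by (rule \<sigma>)

abbreviation "orbit_code i \<equiv> \<theta> ((f ^^ i) y)"
abbreviation "code_space \<equiv> closure (\<theta> ` L)"
abbreviation "decode_L \<equiv> (\<lambda>t. if t \<in> code_space then decode \<theta> t else y)"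
abbreviation "limit_measure \<equiv> distr \<sigma> (restrict_space borel L) decode_L"

lemma funpow_in_L: "(f ^^ i) y \<in> L"
  by (induction i) (use yL fL in auto)

lemma orbit_code_in_code_space: "orbit_code i \<in> code_space"
  by (intro closure_subset[THEN subsetD] imageI funpow_in_L)

lemma decode_orbit_code: "decode \<theta> (orbit_code i) = (f ^^ i) y"
  by (rule decode_code[OF cpt \<theta>])

lemma continuous_on_decode_code_space: "continuous_on code_space (decode \<theta>)"
  by (rule continuous_on_subset[OF continuous_on_decode[OF cpt \<theta>] closure_mono]) blast

lemma decode_in_L: "t \<in> code_space \<Longrightarrow> decode \<theta> t \<in> L"
  using decode_in_closure[OF cpt \<theta>, of t L] L by simp

lemma measure_code_space: "measure \<sigma> code_space = 1"
proof -
  have "{i\<in>{..r k}. orbit_code i \<in> code_space} = {..r k}" for k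
    using orbit_code_in_code_space by auto
  then have "1 \<le> measure \<sigma> code_space"
    by (intro weak_conv_closed_lower_bound[OF real_distribution_empirical_distribution \<sigma> weak_conv])
       (simp_all add: measure_empirical_distribution)
  then show ?thesis
    using \<sigma>.prob_le_1[of code_space] by linarith
qed

lemma borel_measurable_decode_L: "decode_L \<in> borel_measurable borel"
  by (rule borel_measurable_continuous_on_if[OF _ continuous_on_decode_code_space continuous_on_const])
     simp

lemma measurable_decode_L: "decode_L \<in> measurable \<sigma> (restrict_space borel L)"
  using decode_in_L yL
  by (intro measurable_restrict_space2 real_distribution_borel_measurable[OF \<sigma> borel_measurable_decode_L])
     auto

lemma prob_space_limit_measure: "prob_space limit_measure"
  by (rule \<sigma>.prob_space_distr[OF measurable_decode_L])

lemma tendsto_average_integral_limit_measure: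
  fixes \<phi> :: "'a \<Rightarrow> real"
  assumes \<phi>: "continuous_on UNIV \<phi>" "\<And>z. 0 \<le> \<phi> z \<and> \<phi> z \<le> 1"
  shows "(\<lambda>k. (\<Sum>i\<le>r k. \<phi> ((f ^^ i) y)) / real (Suc (r k))) \<longlonglongrightarrow> integral\<^sup>L limit_measure \<phi>"
proof -
  have "continuous_on code_space (\<phi> \<circ> decode \<theta>)"
    by (rule continuous_on_compose[OF continuous_on_decode_code_space continuous_on_subset[OF \<phi>(1)]])
       simp
  from Tietze_unbounded[OF this, of UNIV]
  obtain g where g: "continuous_on UNIV g" "\<And>t. t \<in> code_space \<Longrightarrow> g t = \<phi> (decode \<theta> t)"
    by auto
  define g' where "g' t = max 0 (min 1 (g t))" for t
  have g'_cont: "continuous_on UNIV g'"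
    unfolding g'_def[abs_def] by (intro continuous_intros g(1))
  have g'_eq: "g' t = \<phi> (decode \<theta> t)" if "t \<in> code_space" for t
    using g(2)[OF that] \<phi>(2)[of "decode \<theta> t"] by (simp add: g'_def)
  have [measurable]: "\<phi> \<in> borel_measurable borel" "g' \<in> borel_measurable borel"
    using \<phi>(1) g'_cont by (simp_all add: borel_measurable_continuous_onI)
  have "integral\<^sup>L limit_measure \<phi> = (\<integral>t. \<phi> (decode_L t) \<partial>\<sigma>)"
    by (rule integral_distr[OF measurable_decode_L]) (rule measurable_restrict_space1, simp)
  also have "\<dots> = integral\<^sup>L \<sigma> g'"
  proof (rule integral_cong_AE)
    show "(\<lambda>t. \<phi> (decode_L t)) \<in> borel_measurable \<sigma>" "g' \<in> borel_measurable \<sigma>"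
      using measurable_compose[OF borel_measurable_decode_L, of \<phi>]
      by (simp_all add: real_distribution_borel_measurable[OF \<sigma>])
    show "AE t in \<sigma>. \<phi> (decode_L t) = g' t"
      using \<sigma>.AE_prob_1[OF measure_code_space] by eventually_elim (simp add: g'_eq)
  qed
  finally have "integral\<^sup>L limit_measure \<phi> = integral\<^sup>L \<sigma> g'" .
  moreover have "(\<lambda>k. integral\<^sup>L (empirical_distribution orbit_code (r k)) g') \<longlonglongrightarrow> integral\<^sup>L \<sigma> g'"
  proof (rule weak_conv_imp_integral_bdd_continuous_conv[OF real_distribution_empirical_distribution
        \<sigma> weak_conv, where B = 1])
    show "isCont g' t" for t
      using g'_cont by (simp add: continuous_on_eq_continuous_at)
    show "norm (g' t) \<le> 1" for t
      by (simp add: g'_def)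
  qed
  moreover have "integral\<^sup>L (empirical_distribution orbit_code (r k)) g' =
      (\<Sum>i\<le>r k. \<phi> ((f ^^ i) y)) / real (Suc (r k))" for k
    by (simp add: integral_empirical_distribution g'_eq[OF orbit_code_in_code_space] decode_orbit_code)
  ultimately show ?thesis
    by simp
qed

lemma measurable_f_limit_measure: "f \<in> measurable limit_measure limit_measure"
proof -
  have "f \<in> measurable (restrict_space borel L) (restrict_space borel L)"
    using borel_measurable_continuous_onI[OF cont] fL by (intro measurable_restrict_space3) auto
  then show ?thesis
    by (simp add: measurable_cong_sets[OF sets_distr sets_distr])
qed

text \<open>Averages along the orbits of \<open>y\<close> and of \<open>f y\<close> differ by \<open>O(1/n)\<close>, so both converge to the
  integral of \<open>\<phi>\<close>; the latter also converges to the integral of \<open>\<phi> \<circ> f\<close>.\<close>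

lemma distr_f_limit_measure: "distr limit_measure limit_measure f = limit_measure"
proof (rule finite_measure_eqI_integral_continuous[OF L])
  interpret P: prob_space limit_measure
    by (rule prob_space_limit_measure)
  show "finite_measure (distr limit_measure limit_measure f)"
    by (rule P.finite_measure_distr[OF measurable_f_limit_measure])
  show "finite_measure limit_measure"
    by (rule P.finite_measure_axioms)
  fix \<phi> :: "'a \<Rightarrow> real"
  assume \<phi>: "continuous_on UNIV \<phi>" "\<And>z. 0 \<le> \<phi> z \<and> \<phi> z \<le> 1"
  let ?avg = "\<lambda>\<psi> k. (\<Sum>i\<le>r k. \<psi> ((f ^^ i) y)) / real (Suc (r k))"
  have "(\<lambda>k. ?avg (\<lambda>z. \<phi> (f z)) k) \<longlonglongrightarrow> (\<integral>z. \<phi> (f z) \<partial>limit_measure)"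
    using \<phi> continuous_on_compose2[OF \<phi>(1) cont]
    by (intro tendsto_average_integral_limit_measure) auto
  moreover have "(\<lambda>k. ?avg (\<lambda>z. \<phi> (f z)) k - ?avg \<phi> k) \<longlonglongrightarrow> 0"
  proof (rule Lim_null_comparison)
    have "\<bar>?avg (\<lambda>z. \<phi> (f z)) k - ?avg \<phi> k\<bar> \<le> 1 / real (Suc (r k))" for k
      using average_shift_le[OF \<phi>(2), where n = "r k" and f = f and y = y] by (simp add: funpow_swap1)
    then show "\<forall>\<^sub>F k in sequentially. norm (?avg (\<lambda>z. \<phi> (f z)) k - ?avg \<phi> k) \<le> 1 / real (Suc (r k))"
      by simp
    show "(\<lambda>k. 1 / real (Suc (r k))) \<longlonglongrightarrow> 0"
      using LIMSEQ_subseq_LIMSEQ[OF LIMSEQ_Suc[OF lim_const_over_n] r] by (simp add: comp_def)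
  qed
  ultimately have "(\<lambda>k. ?avg \<phi> k) \<longlonglongrightarrow> (\<integral>z. \<phi> (f z) \<partial>limit_measure)"
    using tendsto_diff by fastforce
  then have "(\<integral>z. \<phi> (f z) \<partial>limit_measure) = integral\<^sup>L limit_measure \<phi>"
    using LIMSEQ_unique tendsto_average_integral_limit_measure[OF \<phi>] by blast
  then show "integral\<^sup>L (distr limit_measure limit_measure f) \<phi> = integral\<^sup>L limit_measure \<phi>"
    by (subst integral_distr[OF measurable_f_limit_measure])
       (simp_all add: measurable_restrict_space1 borel_measurable_continuous_onI[OF \<phi>(1)])
qed simp_all

lemma measure_limit_measure_pos:
  assumes F: "closed F" and dens: "positive_lower_density {i. (f ^^ i) y \<in> F}"
  shows "measure limit_measure (F \<inter> L) > 0"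
proof -
  have FL: "F \<inter> L \<in> sets (restrict_space borel L)"
    using F by (auto simp: sets_restrict_space)
  define K where "K = code_space \<inter> decode \<theta> -` F"
  have "closed K"
    unfolding K_def using F by (intro continuous_closed_preimage continuous_on_decode_code_space) auto
  have measure_K: "measure (empirical_distribution orbit_code n) K =
      real (card {i\<in>{..n}. i \<in> {i. (f ^^ i) y \<in> F}}) / real (Suc n)" for n
  proof -
    have "{i\<in>{..n}. orbit_code i \<in> K} = {i\<in>{..n}. i \<in> {i. (f ^^ i) y \<in> F}}"
      using orbit_code_in_code_space decode_orbit_code by (auto simp: K_def)
    then show ?thesis
      using \<open>closed K\<close> by (simp add: measure_empirical_distribution)
  qed
  obtain c where "c > 0"
    and averages: "\<forall>\<^sub>F n in sequentially. c \<le> real (card {i\<in>{..n}. i \<in> {i. (f ^^ i) y \<in> F}}) / real (Suc n)"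
    using positive_lower_density_averages[OF dens] by blast
  have "\<forall>\<^sub>F k in sequentially. c \<le> measure (empirical_distribution orbit_code (r k)) K"
    unfolding measure_K by (rule eventually_subseq[OF r averages])
  then have "c \<le> measure \<sigma> K"
    by (rule weak_conv_closed_lower_bound[OF real_distribution_empirical_distribution \<sigma> weak_conv \<open>closed K\<close>])
  also have "\<dots> \<le> measure \<sigma> (decode_L -` (F \<inter> L) \<inter> space \<sigma>)"
  proof (rule \<sigma>.finite_measure_mono)
    show "K \<subseteq> decode_L -` (F \<inter> L) \<inter> space \<sigma>"
      using decode_in_L by (auto simp: K_def)
  qed (rule measurable_sets[OF measurable_decode_L FL])
  also have "\<dots> = measure limit_measure (F \<inter> L)"
    by (rule measure_distr[OF measurable_decode_L FL, symmetric])
  finally show ?thesis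
    using \<open>c > 0\<close> by linarith
qed

lemma limit_measure_in_invariant_measures: "limit_measure \<in> invariant_measures f L"
  unfolding invariant_measures_def
proof (intro CollectI conjI ballI)
  fix A
  assume A: "A \<in> sets limit_measure"
  have "emeasure limit_measure (f -` A \<inter> L) = emeasure (distr limit_measure limit_measure f) A"
    using emeasure_distr[OF measurable_f_limit_measure A] by (simp add: space_restrict_space)
  then show "emeasure limit_measure (f -` A \<inter> L) = emeasure limit_measure A"
    by (simp add: distr_f_limit_measure)
qed (simp_all add: prob_space_limit_measure)

end

theorem krylov_bogolyubov_positive_lower_density:
  fixes f :: "'a::metric_space \<Rightarrow> 'a"
  assumes cpt: "compact (UNIV :: 'a set)" and cont: "continuous_on UNIV f"
    and L: "closed L" and fL: "f ` L \<subseteq> L" and yL: "y \<in> L"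
    and F: "closed F" and dens: "positive_lower_density {i. (f ^^ i) y \<in> F}"
  shows "\<exists>\<mu>\<in>invariant_measures f L. measure \<mu> (F \<inter> L) > 0"
proof -
  obtain \<theta> :: "'a \<Rightarrow> real" where \<theta>: "\<And>z. 0 \<le> \<theta> z" "\<And>z. \<theta> z \<le> 1" "uniformly_continuous_inverse \<theta>"
    using compact_uniformly_continuous_inverse_code[OF cpt] by blast
  have "tight (empirical_distribution (\<lambda>i. \<theta> ((f ^^ i) y)))"
    using \<theta>(1,2) by (intro tight_empirical_distribution[where B = 1]) (simp add: abs_le_iff)
  from tight_imp_convergent_subsubsequence[OF this strict_mono_id]
  obtain r \<sigma> where "strict_mono r" "real_distribution \<sigma>"
    and "weak_conv_m (empirical_distribution (\<lambda>i. \<theta> ((f ^^ i) y)) \<circ> id \<circ> r) \<sigma>"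
    by blast
  then have "weak_conv_m (\<lambda>k. empirical_distribution (\<lambda>i. \<theta> ((f ^^ i) y)) (r k)) \<sigma>"
    by (simp add: comp_def)
  note limit = \<open>strict_mono r\<close> \<open>real_distribution \<sigma>\<close> this
  show ?thesis
    using limit_measure_in_invariant_measures[OF cpt cont L fL yL \<theta>(3) limit]
      measure_limit_measure_pos[OF cpt cont L fL yL \<theta>(3) limit F dens] by blast
qed

section \<open>The measure center\<close>

lemma measure_center_eqI:
  assumes "is_measure_center f L C"
  shows "measure_center L f = C"
  unfolding measure_center_def
proof (rule the_equality[where P = "is_measure_center f L", OF assms])
  fix C'
  assume "is_measure_center f L C'"
  with assms show "C' = C"
    unfolding is_measure_center_def by (meson subset_antisym)
qed

lemma weakly_almost_periodic_subset_full_measure: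
  fixes f :: "'a::metric_space \<Rightarrow> 'a"
  assumes cpt: "compact (UNIV :: 'a set)" and cont: "continuous_on UNIV f"
    and L: "closed L" and fL: "f ` L \<subseteq> L"
    and D: "closed D" "\<forall>\<mu>\<in>invariant_measures f L. emeasure \<mu> D = 1"
  shows "{y\<in>L. weakly_almost_periodic f y} \<subseteq> D"
proof (rule subsetI, rule ccontr)
  fix y
  assume y: "y \<in> {y\<in>L. weakly_almost_periodic f y}" and "y \<notin> D"
  then obtain e where "e > 0" "ball y e \<subseteq> - D"
    using D(1) open_contains_ball by blast
  then obtain \<delta> where "\<delta> > 0" and disjoint: "cball y \<delta> \<inter> D = {}"
    using cball_subset_ball by blast
  have "positive_lower_density (visit_times f y (ball y \<delta>))"
    using y \<open>\<delta> > 0\<close> by (simp add: weakly_almost_periodic_def)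
  moreover have "visit_times f y (ball y \<delta>) \<subseteq> {i. (f ^^ i) y \<in> cball y \<delta>}"
    by (auto simp: visit_times_def)
  ultimately have "positive_lower_density {i. (f ^^ i) y \<in> cball y \<delta>}"
    by (rule positive_lower_density_subset)
  then obtain \<mu> where \<mu>: "\<mu> \<in> invariant_measures f L" and pos: "measure \<mu> (cball y \<delta> \<inter> L) > 0"
    using krylov_bogolyubov_positive_lower_density[OF cpt cont L fL _ closed_cball] y by blast
  interpret prob_space \<mu>
    using invariant_measuresD(3)[OF cont fL \<mu>] .
  have "emeasure \<mu> D = 1"
    using D(2) \<mu> by blast
  then have "D \<in> sets \<mu>" "prob D = 1"
    using emeasure_notin_sets[of D \<mu>] by (auto simp: emeasure_eq_measure)
  moreover have "cball y \<delta> \<inter> L \<in> sets \<mu>"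
    using invariant_measuresD(1)[OF cont fL \<mu>] by (auto simp: sets_restrict_space)
  ultimately have "prob (D \<union> (cball y \<delta> \<inter> L)) = 1 + prob (cball y \<delta> \<inter> L)"
    using disjoint by (subst finite_measure_Union) auto
  with pos prob_le_1[of "D \<union> (cball y \<delta> \<inter> L)"] show False
    by linarith
qed

theorem is_measure_center_closure_weakly_almost_periodic:
  fixes f :: "'a::metric_space \<Rightarrow> 'a"
  assumes cpt: "compact (UNIV :: 'a set)" and cont: "continuous_on UNIV f"
    and L: "closed L" and fL: "f ` L \<subseteq> L"
  shows "is_measure_center f L (closure {y\<in>L. weakly_almost_periodic f y})"
    (is "is_measure_center f L (closure ?W)")
  unfolding is_measure_center_def
proof (intro conjI allI impI ballI)
  show "closure ?W \<subseteq> L"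
    using L by (intro closure_minimal) auto
  have "f ` ?W \<subseteq> ?W"
    using fL weakly_almost_periodic_image[OF cont] by blast
  then show "f ` closure ?W \<subseteq> closure ?W"
    using closure_subset[of ?W]
    by (intro image_closure_subset[OF continuous_on_subset[OF cont subset_UNIV] closed_closure]) blast
  show "emeasure \<mu> (closure ?W) = 1" if \<mu>: "\<mu> \<in> invariant_measures f L" for \<mu>
  proof -
    note \<mu>_props = invariant_measuresD[OF cont fL \<mu>]
    interpret prob_space \<mu>
      by (rule \<mu>_props(3))
    have "closure ?W \<in> sets \<mu>"
      using \<mu>_props(1) \<open>closure ?W \<subseteq> L\<close> by (auto simp: sets_restrict_space)
    moreover have "AE z in \<mu>. z \<in> ?W"
      using AE_weakly_almost_periodic[OF cpt cont fL \<mu>] AE_space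
      by eventually_elim (simp add: \<mu>_props(2))
    then have "AE z in \<mu>. z \<in> closure ?W"
      by eventually_elim (rule closure_subset[THEN subsetD])
    ultimately show ?thesis
      using prob_eq_1 by (simp add: emeasure_eq_measure)
  qed
  show "closure ?W \<subseteq> D"
    if "D \<subseteq> L \<and> closed D \<and> f ` D \<subseteq> D \<and> (\<forall>\<mu>\<in>invariant_measures f L. emeasure \<mu> D = 1)" for D
    using that weakly_almost_periodic_subset_full_measure[OF cpt cont L fL, of D]
    by (intro closure_minimal) simp_all
qed simp

theorem lemma2p3:
  fixes f :: "'a::metric_space \<Rightarrow> 'a" and x :: 'a
  assumes "compact (UNIV :: 'a set)"
    and "continuous_on UNIV f"
  shows "measure_center (omega_limit f x) f =
         closure {y \<in> omega_limit f x.
                    \<forall>\<epsilon>>0. lower_density (visit_times f y (ball y \<epsilon>)) > 0}"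
proof -
  have "{y \<in> omega_limit f x. \<forall>\<epsilon>>0. lower_density (visit_times f y (ball y \<epsilon>)) > 0} =
      {y \<in> omega_limit f x. weakly_almost_periodic f y}"
    by (simp add: weakly_almost_periodic_def lower_density_pos_iff)
  then show ?thesis
    using is_measure_center_closure_weakly_almost_periodic[OF assms closed_omega_limit
        image_omega_limit_subset[OF assms(2)]]
    by (simp add: measure_center_eqI)
qed

end
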